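(* Let $B$ be a $\mathbb{Z}$-graded integral domain containing a field $k$. If $B$ has a cylindrical element, then there exists a field $K$ with $k\subseteq K\subseteq \operatorname{Frac}(B)$ such that $\operatorname{Frac}(B)$ is a purely transcendental extension of $K$ of transcendence degree $2$.
   Context: For a nonzero homogeneous $f\in B$, $B_{(f)}$ denotes the degree-$0$ subring of the graded ring $B_f=S^{-1}B$, $S=\{1,f,f^2,\dots\}$. A ring $C$ is a polynomial ring in one variable if there is a subring $A\subseteq C$ such that $C$ is a polynomial ring in one variable over $A$ (the zero ring counts). An element $f$ of a $\mathbb{Z}$-graded domain $B$ is cylindrical if it is nonzero, homogeneous of nonzero degree, and $B_{(f)}$ is a polynomial ring in one variable. *)

theory Defs
  imports "HOL-Computational_Algebra.Polynomial" "HOL-Computational_Algebra.Fraction_Field"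
begin

definition is_subring :: "'a::comm_ring_1 set \<Rightarrow> bool" where
  "is_subring A \<longleftrightarrow> 0 \<in> A \<and> 1 \<in> A \<and>
     (\<forall>a\<in>A. \<forall>b\<in>A. a + b \<in> A \<and> a - b \<in> A \<and> a * b \<in> A)"

definition is_subfield :: "'a::comm_ring_1 set \<Rightarrow> bool" where
  "is_subfield A \<longleftrightarrow> is_subring A \<and> (\<forall>a\<in>A. a \<noteq> 0 \<longrightarrow> (\<exists>b\<in>A. a * b = 1))"

text \<open>A Z-grading B = (direct sum over d) B_d, with B_d B_e contained in B_(d+e).\<close>
definition Z_grading :: "(int \<Rightarrow> 'b::comm_ring_1 set) \<Rightarrow> bool" where
  "Z_grading G \<longleftrightarrow>
     (\<forall>d. 0 \<in> G d \<and> (\<forall>a\<in>G d. \<forall>b\<in>G d. a + b \<in> G d \<and> - a \<in> G d)) \<and>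
     (\<forall>d e. \<forall>a\<in>G d. \<forall>b\<in>G e. a * b \<in> G (d + e)) \<and>
     (\<forall>b. \<exists>c. finite {d. c d \<noteq> 0} \<and> (\<forall>d. c d \<in> G d) \<and> b = (\<Sum>d\<in>{d. c d \<noteq> 0}. c d)) \<and>
     (\<forall>c. finite {d. c d \<noteq> 0} \<and> (\<forall>d. c d \<in> G d) \<and> (\<Sum>d\<in>{d. c d \<noteq> 0}. c d) = 0
          \<longrightarrow> (\<forall>d. c d = 0))"

text \<open>Degree-0 part B_(f) of B_f, for f homogeneous of degree d, realised inside Frac(B):
  the elements a / f^n with a homogeneous of degree n*d.\<close>
definition hloc0 :: "(int \<Rightarrow> 'b::idom set) \<Rightarrow> int \<Rightarrow> 'b \<Rightarrow> 'b fract set" where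
  "hloc0 G d f = {x. \<exists>n::nat. \<exists>a\<in>G (int n * d). x = Fract a (f ^ n)}"

definition poly_ring1 :: "'a::comm_ring_1 set \<Rightarrow> bool" where
  "poly_ring1 C \<longleftrightarrow> (\<exists>A t. is_subring A \<and> A \<subseteq> C \<and> t \<in> C \<and>
      C = {poly p t | p. set (coeffs p) \<subseteq> A} \<and>
      (\<forall>p. set (coeffs p) \<subseteq> A \<and> poly p t = 0 \<longrightarrow> p = 0))"

definition cylindrical :: "(int \<Rightarrow> 'b::idom set) \<Rightarrow> 'b \<Rightarrow> bool" where
  "cylindrical G f \<longleftrightarrow> f \<noteq> 0 \<and> (\<exists>d. d \<noteq> 0 \<and> f \<in> G d \<and> poly_ring1 (hloc0 G d f))"

definition alg_indep2 :: "'a::field set \<Rightarrow> 'a \<Rightarrow> 'a \<Rightarrow> bool" where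
  "alg_indep2 K x y \<longleftrightarrow> (\<forall>P :: 'a poly poly.
      (\<forall>q\<in>set (coeffs P). set (coeffs q) \<subseteq> K) \<and> poly (map_poly (\<lambda>q. poly q x) P) y = 0
      \<longrightarrow> P = 0)"

definition field_gen :: "'a::field set \<Rightarrow> 'a set" where
  "field_gen S = \<Inter>{L. is_subfield L \<and> S \<subseteq> L}"

end

(*
  Let f be cylindrical of degree d, with B_(f) = A[t]. Every nonzero homogeneous fraction p/q of
  Frac(B) has a degree deg p - deg q; these degrees form a nonzero subgroup e Z of Z, and we fix a
  fraction y of degree e. Put K = Frac(A). Every fraction of degree 0 is a quotient of elements of
  B_(f) = A[t], and a homogeneous element of degree j e is (b / y^j) y^j, so Frac(B) = K(t, y).
  A relation sum_j P_j(t) y^j = 0 splits into homogeneous components of the distinct degrees j e,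
  so every P_j(t) vanishes, and then P_j = 0 because t is transcendental over K. Finally k lies
  in K: the elements of k are units of B, hence homogeneous, in fact of degree 0, hence units of
  A[t], that is, elements of A.
*)

theory Submission
  imports Defs
begin

section \<open>Subrings, subfields and fraction fields\<close>

lemma subring_0: "is_subring A \<Longrightarrow> 0 \<in> A"
  and subring_1: "is_subring A \<Longrightarrow> 1 \<in> A"
  and subring_add: "is_subring A \<Longrightarrow> a \<in> A \<Longrightarrow> b \<in> A \<Longrightarrow> a + b \<in> A"
  and subring_diff: "is_subring A \<Longrightarrow> a \<in> A \<Longrightarrow> b \<in> A \<Longrightarrow> a - b \<in> A"
  and subring_mult: "is_subring A \<Longrightarrow> a \<in> A \<Longrightarrow> b \<in> A \<Longrightarrow> a * b \<in> A"
  by (simp_all add: is_subring_def)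

lemma subring_sum: "is_subring A \<Longrightarrow> (\<And>i. i \<in> S \<Longrightarrow> g i \<in> A) \<Longrightarrow> sum g S \<in> A"
  by (induction S rule: infinite_finite_induct) (auto intro: subring_0 subring_add)

lemma subring_power: "is_subring A \<Longrightarrow> a \<in> A \<Longrightarrow> a ^ n \<in> A"
  by (induction n) (auto intro: subring_1 subring_mult)

lemma subring_poly:
  assumes "is_subring A" "\<And>n. coeff p n \<in> A" "t \<in> A"
  shows "poly p t \<in> A"
  unfolding poly_altdef using assms by (intro subring_sum subring_mult subring_power) auto

lemma subring_coeff_mult:
  "is_subring A \<Longrightarrow> (\<And>n. coeff p n \<in> A) \<Longrightarrow> (\<And>n. coeff q n \<in> A) \<Longrightarrow> coeff (p * q) n \<in> A"
  by (simp add: coeff_mult subring_sum subring_mult)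

lemma set_coeffs_subset_iff: "0 \<in> A \<Longrightarrow> set (coeffs p) \<subseteq> A \<longleftrightarrow> (\<forall>n. coeff p n \<in> A)"
  using forall_coeffs_conv[of "\<lambda>c. c \<in> A" p] by auto

lemma subring_poly_image_subset:
  assumes "is_subring L" "A \<subseteq> L" "t \<in> L"
  shows "{poly p t | p. set (coeffs p) \<subseteq> A} \<subseteq> L"
  using assms subring_poly[of L] set_coeffs_subset_iff[OF subring_0[OF assms(1)]] by blast

lemma subfield_imp_subring: "is_subfield A \<Longrightarrow> is_subring A"
  by (simp add: is_subfield_def)

lemma subfield_right_inverse: "is_subfield A \<Longrightarrow> a \<in> A \<Longrightarrow> a \<noteq> 0 \<Longrightarrow> \<exists>b\<in>A. a * b = 1"
  by (simp add: is_subfield_def)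

lemma subfield_inverse:
  fixes a :: "'a::field"
  assumes "is_subfield L" "a \<in> L"
  shows "inverse a \<in> L"
proof (cases "a = 0")
  case True
  then show ?thesis using assms by (simp add: subring_0 subfield_imp_subring)
next
  case False
  then obtain b where "b \<in> L" "a * b = 1" using subfield_right_inverse[OF assms] by blast
  then show ?thesis using inverse_unique by metis
qed

lemma subfield_divide: "is_subfield L \<Longrightarrow> (a::'a::field) \<in> L \<Longrightarrow> b \<in> L \<Longrightarrow> a / b \<in> L"
  by (simp add: divide_inverse subring_mult subfield_imp_subring subfield_inverse)

lemma subfield_power_int: "is_subfield L \<Longrightarrow> (a::'a::field) \<in> L \<Longrightarrow> a powi n \<in> L"
  by (simp add: power_int_def subring_power subfield_imp_subring subfield_inverse)

lemma subfieldI: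
  fixes L :: "'a::field set"
  assumes "is_subring L" "\<And>a. a \<in> L \<Longrightarrow> inverse a \<in> L"
  shows "is_subfield L"
  unfolding is_subfield_def using assms right_inverse by blast

lemma is_subfield_field_gen: "is_subfield (field_gen (S::'a::field set))"
proof (rule subfieldI)
  show "is_subring (field_gen S)"
    unfolding is_subring_def field_gen_def
    by (auto intro: subring_0 subring_1 subring_add subring_diff subring_mult subfield_imp_subring)
qed (auto simp: field_gen_def intro: subfield_inverse)

lemma field_gen_superset: "S \<subseteq> field_gen S"
  unfolding field_gen_def by blast

definition frac_field :: "'a::field set \<Rightarrow> 'a set" where
  "frac_field A = {a / b | a b. a \<in> A \<and> b \<in> A \<and> b \<noteq> 0}"

lemma frac_fieldI: "a \<in> A \<Longrightarrow> b \<in> A \<Longrightarrow> b \<noteq> 0 \<Longrightarrow> a / b \<in> frac_field A"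
  unfolding frac_field_def by blast

lemma subset_frac_field: "is_subring A \<Longrightarrow> A \<subseteq> frac_field A"
  using frac_fieldI[of _ A 1] by (auto intro: subring_1)

lemma frac_field_subset: "is_subfield L \<Longrightarrow> A \<subseteq> L \<Longrightarrow> frac_field A \<subseteq> L"
  unfolding frac_field_def by (auto intro: subfield_divide)

lemma is_subfield_frac_field:
  assumes A: "is_subring A"
  shows "is_subfield (frac_field A)"
proof (rule subfieldI)
  have sums: "a / b + a' / b' = (a * b' + a' * b) / (b * b')"
    and diffs: "a / b - a' / b' = (a * b' - a' * b) / (b * b')"
    if "b \<noteq> 0" "b' \<noteq> 0" for a b a' b' :: 'a
    using that by (simp_all add: field_simps)
  show "is_subring (frac_field A)"
    unfolding is_subring_def
  proof (intro conjI ballI)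
    show "0 \<in> frac_field A" "1 \<in> frac_field A"
      using subset_frac_field[OF A] A by (auto intro: subring_0 subring_1)
    fix x y assume "x \<in> frac_field A" "y \<in> frac_field A"
    then obtain a b a' b' where ab: "a \<in> A" "b \<in> A" "b \<noteq> 0" "x = a / b"
      and ab': "a' \<in> A" "b' \<in> A" "b' \<noteq> 0" "y = a' / b'"
      unfolding frac_field_def by blast
    show "x + y \<in> frac_field A" "x - y \<in> frac_field A" "x * y \<in> frac_field A"
      unfolding ab(4) ab'(4) sums[OF ab(3) ab'(3)] diffs[OF ab(3) ab'(3)] times_divide_times_eq
      using ab ab' A by (auto intro!: frac_fieldI subring_add subring_diff subring_mult)
  qed
  fix x assume "x \<in> frac_field A"
  then obtain a b where "a \<in> A" "b \<in> A" "b \<noteq> 0" "x = a / b"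
    unfolding frac_field_def by blast
  then show "inverse x \<in> frac_field A"
    using subring_0[OF A] frac_fieldI[of b A a] by (cases "a = 0") (use subset_frac_field[OF A] in auto)
qed

lemma frac_field_common_denominator:
  assumes A: "is_subring A" and "finite X" "X \<subseteq> frac_field A"
  shows "\<exists>D\<in>A. D \<noteq> 0 \<and> (\<forall>x\<in>X. D * x \<in> A)"
  using assms(2,3)
proof (induction X rule: finite_induct)
  case empty
  then show ?case using subring_1[OF A] by (intro bexI[of _ 1]) auto
next
  case (insert x X)
  then obtain D where D: "D \<in> A" "D \<noteq> 0" "\<forall>x\<in>X. D * x \<in> A" by auto
  from insert obtain a b where ab: "a \<in> A" "b \<in> A" "b \<noteq> 0" "x = a / b"
    unfolding frac_field_def by blast
  have "D * b * x = D * a" using ab by simp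
  moreover have "D * b * z \<in> A" if "z \<in> X" for z
    using subring_mult[OF A ab(2), of "D * z"] D(3) that by (simp add: algebra_simps)
  ultimately show ?case using D ab by (intro bexI[of _ "D * b"]) (auto intro: subring_mult[OF A])
qed

definition transcendental_over :: "'a::comm_ring_1 set \<Rightarrow> 'a \<Rightarrow> bool" where
  "transcendental_over A t \<longleftrightarrow> (\<forall>p. set (coeffs p) \<subseteq> A \<and> poly p t = 0 \<longrightarrow> p = 0)"

lemma transcendental_overD:
  "transcendental_over A t \<Longrightarrow> 0 \<in> A \<Longrightarrow> (\<And>n. coeff p n \<in> A) \<Longrightarrow> poly p t = 0 \<Longrightarrow> p = 0"
  unfolding transcendental_over_def using set_coeffs_subset_iff by blast

lemma transcendental_over_frac_field:
  assumes A: "is_subring A" and t: "transcendental_over A t"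
  shows "transcendental_over (frac_field A) t"
  unfolding transcendental_over_def
proof (intro allI impI)
  fix q assume q: "set (coeffs q) \<subseteq> frac_field A \<and> poly q t = 0"
  then obtain D where D: "D \<in> A" "D \<noteq> 0" "\<forall>x\<in>set (coeffs q). D * x \<in> A"
    using frac_field_common_denominator[OF A] by blast
  have "coeff (smult D q) n \<in> A" for n
    using D(3) subring_0[OF A] forall_coeffs_conv[of "\<lambda>c. D * c \<in> A" q] by auto
  moreover have "poly (smult D q) t = 0" using q by simp
  ultimately have "smult D q = 0" using transcendental_overD[OF t subring_0[OF A]] by blast
  then show "q = 0" using D(2) by simp
qed

lemma poly_unit_in_subring:
  fixes t :: "'a::idom"
  assumes A: "is_subring A" and t: "transcendental_over A t"
    and p: "\<And>n. coeff p n \<in> A" and q: "\<And>n. coeff q n \<in> A"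
    and unit: "poly p t * poly q t = 1"
  shows "poly p t \<in> A"
proof -
  have "coeff (p * q - 1) n \<in> A" for n
    using subring_coeff_mult[OF A p q] A by (auto intro!: subring_diff subring_0 subring_1)
  moreover have "poly (p * q - 1) t = 0" using unit by simp
  ultimately have pq: "p * q = 1" using transcendental_overD[OF t subring_0[OF A]] by fastforce
  then have "degree p = 0" using degree_mult_eq[of p q] by fastforce
  then show ?thesis using p by (simp add: poly_altdef)
qed

lemma int_set_diff_closed_generator:
  fixes E :: "int set"
  assumes diff: "\<And>m n. m \<in> E \<Longrightarrow> n \<in> E \<Longrightarrow> m - n \<in> E" and a: "a \<in> E" "a \<noteq> 0"
  obtains e where "e > 0" "e \<in> E" "\<And>m. m \<in> E \<Longrightarrow> e dvd m"
proof -
  have zero: "0 \<in> E" using diff[OF a(1) a(1)] by simp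
  have multiple: "i * m \<in> E" if m: "m \<in> E" for i m
  proof (induction i rule: int_induct[where k = 0])
    case base
    then show ?case using zero by simp
  next
    case (step1 i)
    then have "i * m - (0 - m) \<in> E" using diff zero m by blast
    then show ?case by (simp add: algebra_simps)
  next
    case (step2 i)
    then have "i * m - m \<in> E" using diff m by blast
    then show ?case by (simp add: algebra_simps)
  qed
  define P where "P n \<longleftrightarrow> 0 < n \<and> int n \<in> E" for n
  define e where "e = (LEAST n. P n)"
  have "\<bar>a\<bar> \<in> E" using a(1) multiple[OF a(1), of "-1"] by (cases "a \<ge> 0") auto
  then have "P (nat \<bar>a\<bar>)" using a(2) by (simp add: P_def)
  then have e: "P e" unfolding e_def by (rule LeastI)
  have "int e dvd m" if m: "m \<in> E" for m
  proof -
    have "m - m div int e * int e \<in> E" using diff[OF m multiple] e by (simp add: P_def)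
    then have "m mod int e \<in> E" by (simp add: minus_div_mult_eq_mod)
    moreover have "0 \<le> m mod int e" "m mod int e < int e" using e by (simp_all add: P_def)
    ultimately have "\<not> P (nat (m mod int e)) \<or> m mod int e = 0"
      using not_less_Least[of "nat (m mod int e)" P] unfolding e_def[symmetric] by (auto simp: P_def)
    then show ?thesis using \<open>m mod int e \<in> E\<close> \<open>0 \<le> m mod int e\<close> by (auto simp: P_def dvd_eq_mod_eq_0)
  qed
  then show thesis using that[of "int e"] e by (simp add: P_def)
qed

text \<open>The largest and the smallest element of \<open>S + T\<close> have unique representations.\<close>
lemma singleton_if_unique_sums_eq:
  fixes S T :: "int set"
  assumes fin: "finite S" "finite T" and ne: "S \<noteq> {}" "T \<noteq> {}"
    and unique_sum: "\<And>i j. i \<in> S \<Longrightarrow> j \<in> T \<Longrightarrow>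
      (\<And>i' j'. i' \<in> S \<Longrightarrow> j' \<in> T \<Longrightarrow> i' + j' = i + j \<Longrightarrow> i' = i \<and> j' = j) \<Longrightarrow> i + j = m"
  shows "\<exists>M. S = {M}"
proof -
  have "Max S + Max T = m"
  proof (rule unique_sum)
    fix i j assume "i \<in> S" "j \<in> T" "i + j = Max S + Max T"
    moreover have "i \<le> Max S" "j \<le> Max T" using fin \<open>i \<in> S\<close> \<open>j \<in> T\<close> by simp_all
    ultimately show "i = Max S \<and> j = Max T" by linarith
  qed (use fin ne in auto)
  moreover have "Min S + Min T = m"
  proof (rule unique_sum)
    fix i j assume "i \<in> S" "j \<in> T" "i + j = Min S + Min T"
    moreover have "Min S \<le> i" "Min T \<le> j" using fin \<open>i \<in> S\<close> \<open>j \<in> T\<close> by simp_all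
    ultimately show "i = Min S \<and> j = Min T" by linarith
  qed (use fin ne in auto)
  moreover have "Min S \<le> Max S" "Min T \<le> Max T" using fin ne by auto
  ultimately have "Min S = Max S" by linarith
  then have "S = {Max S}"
    using fin ne Max_in[OF fin(1)] Max_ge[OF fin(1)] Min_le[OF fin(1)]
    by (metis antisym singleton_iff subsetI subset_singletonD)
  then show ?thesis by blast
qed

definition to_fract :: "'a::idom \<Rightarrow> 'a fract" where
  "to_fract a = Fract a 1"

lemma to_fract_0: "to_fract 0 = 0"
  and to_fract_1: "to_fract 1 = 1"
  and to_fract_add: "to_fract (a + b) = to_fract a + to_fract b"
  and to_fract_uminus: "to_fract (- a) = - to_fract a"
  and to_fract_mult: "to_fract (a * b) = to_fract a * to_fract b"
  and Fract_eq_to_fract_divide: "Fract a b = to_fract a / to_fract b"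
  by (simp_all add: to_fract_def fract_collapse eq_fract)

lemma to_fract_eq_0_iff: "to_fract a = 0 \<longleftrightarrow> a = 0"
  using eq_fract(1)[of 1 1 a 0] by (simp add: to_fract_def Zero_fract_def)

lemma to_fract_sum: "to_fract (sum g S) = (\<Sum>x\<in>S. to_fract (g x))"
  by (induction S rule: infinite_finite_induct) (auto simp: to_fract_0 to_fract_add)

lemma to_fract_power: "to_fract (a ^ n) = to_fract a ^ n"
  by (induction n) (auto simp: to_fract_1 to_fract_mult)

section \<open>\<open>\<int>\<close>-graded domains\<close>

locale Z_graded_domain =
  fixes G :: "int \<Rightarrow> 'b::idom set"
  assumes Z_grading: "Z_grading G"
begin

lemma homogeneous_0: "0 \<in> G m"
  and homogeneous_add: "a \<in> G m \<Longrightarrow> b \<in> G m \<Longrightarrow> a + b \<in> G m"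
  and homogeneous_uminus: "a \<in> G m \<Longrightarrow> - a \<in> G m"
  and homogeneous_mult: "a \<in> G m \<Longrightarrow> b \<in> G n \<Longrightarrow> a * b \<in> G (m + n)"
  using Z_grading unfolding Z_grading_def by blast+

lemma homogeneous_diff: "a \<in> G m \<Longrightarrow> b \<in> G m \<Longrightarrow> a - b \<in> G m"
  using homogeneous_add[OF _ homogeneous_uminus, of a m b] by simp

lemma homogeneous_sum: "(\<And>i. i \<in> S \<Longrightarrow> g i \<in> G m) \<Longrightarrow> sum g S \<in> G m"
  by (induction S rule: infinite_finite_induct) (auto intro: homogeneous_0 homogeneous_add)

lemma homogeneous_decomposition:
  "\<exists>c. finite {m. c m \<noteq> 0} \<and> (\<forall>m. c m \<in> G m) \<and> b = (\<Sum>m\<in>{m. c m \<noteq> 0}. c m)"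
  using Z_grading unfolding Z_grading_def by blast

lemma homogeneous_components_unique:
  "finite {m. c m \<noteq> 0} \<Longrightarrow> (\<And>m. c m \<in> G m) \<Longrightarrow> (\<Sum>m\<in>{m. c m \<noteq> 0}. c m) = 0 \<Longrightarrow> c m = 0"
  using Z_grading unfolding Z_grading_def by blast

lemma sum_homogeneous_isolated_degree:
  assumes fin: "finite I" and hom: "\<And>i. i \<in> I \<Longrightarrow> b i \<in> G (\<delta> i)"
    and r: "r \<in> G m" and sum_eq: "(\<Sum>i\<in>I. b i) = r"
    and i0: "i0 \<in> I" "\<delta> i0 \<noteq> m" "\<And>i. i \<in> I \<Longrightarrow> \<delta> i = \<delta> i0 \<Longrightarrow> i = i0"
  shows "b i0 = 0"
proof -
  define c where "c n = (\<Sum>i\<in>{i\<in>I. \<delta> i = n}. b i) - (if n = m then r else 0)" for n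
  define U where "U = insert m (\<delta> ` I)"
  have finU: "finite U" using fin by (simp add: U_def)
  have c_hom: "c n \<in> G n" for n
    unfolding c_def using hom r by (auto intro!: homogeneous_diff homogeneous_sum homogeneous_0)
  have "c n = 0" if "n \<notin> U" for n
  proof -
    have no_terms: "{i\<in>I. \<delta> i = n} = {}" using that by (auto simp: U_def)
    show ?thesis using that unfolding c_def no_terms U_def by simp
  qed
  then have supp: "{n. c n \<noteq> 0} \<subseteq> U" by blast
  have "(\<Sum>n\<in>{n. c n \<noteq> 0}. c n) = (\<Sum>n\<in>U. c n)"
    by (rule sum.mono_neutral_left[OF finU supp]) auto
  also have "\<dots> = (\<Sum>n\<in>U. \<Sum>i\<in>{i\<in>I. \<delta> i = n}. b i) - (\<Sum>n\<in>U. if n = m then r else 0)"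
    unfolding c_def by (simp add: sum_subtractf)
  also have "(\<Sum>n\<in>U. \<Sum>i\<in>{i\<in>I. \<delta> i = n}. b i) = (\<Sum>i\<in>I. b i)"
    by (rule sum.group[OF fin finU]) (auto simp: U_def)
  also have "(\<Sum>n\<in>U. if n = m then r else 0) = r" using finU by (simp add: U_def)
  finally have "(\<Sum>n\<in>{n. c n \<noteq> 0}. c n) = 0" using sum_eq by simp
  then have "c (\<delta> i0) = 0"
    by (rule homogeneous_components_unique[OF finite_subset[OF supp finU] c_hom])
  moreover have "{i\<in>I. \<delta> i = \<delta> i0} = {i0}" using i0 by auto
  ultimately show ?thesis using i0(2) by (simp add: c_def)
qed

lemma homogeneous_add_isolated_degree:
  assumes "a \<in> G i" "b \<in> G j" "a + b \<in> G m" "i \<noteq> j" "i \<noteq> m"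
  shows "a = 0"
proof -
  have "(\<lambda>x. if x then a else b) True = 0"
    by (rule sum_homogeneous_isolated_degree[of UNIV _ "\<lambda>x. if x then i else j" "a + b" m])
       (use assms in \<open>auto simp: UNIV_bool split: if_splits\<close>)
  then show ?thesis by simp
qed

lemma one_homogeneous: "1 \<in> G 0"
proof -
  obtain c where fin: "finite {m. c m \<noteq> 0}" and c: "\<And>m. c m \<in> G m"
    and one: "1 = (\<Sum>m\<in>{m. c m \<noteq> 0}. c m)"
    using homogeneous_decomposition[of 1] by blast
  define S where "S = {m. c m \<noteq> 0}"
  obtain i where i: "i \<in> S" using one by (fastforce simp: S_def)
  have "S \<subseteq> {0}"
  proof
    fix j assume j: "j \<in> S"
    have "(\<Sum>j\<in>S. c i * c j) = c i" using one by (simp flip: sum_distrib_left add: S_def)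
    text \<open>\<open>c i = c i * 1\<close> is homogeneous of degree \<open>i\<close>, its components are \<open>c i * c j\<close>.\<close>
    then have "c i * c j = 0" if "j \<noteq> 0"
      using fin c i j that homogeneous_mult
      by (intro sum_homogeneous_isolated_degree[of S _ "\<lambda>j. i + j" "c i" i j]) (auto simp: S_def)
    then show "j \<in> {0}" using i j by (auto simp: S_def)
  qed
  then have "S = {0}" using i by blast
  then show ?thesis using one c[of 0] by (simp add: S_def)
qed

lemma homogeneous_power: "a \<in> G m \<Longrightarrow> a ^ n \<in> G (int n * m)"
proof (induction n)
  case 0
  then show ?case using one_homogeneous by simp
next
  case (Suc n)
  then have "a * a ^ n \<in> G (m + int n * m)" using homogeneous_mult by blast
  then show ?case by (simp add: algebra_simps)
qed

lemma homogeneous_prod: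
  "finite S \<Longrightarrow> (\<And>i. i \<in> S \<Longrightarrow> g i \<in> G (\<delta> i)) \<Longrightarrow> prod g S \<in> G (sum \<delta> S)"
  by (induction S rule: finite_induct) (auto intro: one_homogeneous homogeneous_mult)

lemma product_isolated_degree:
  assumes fin: "finite S" "finite T"
    and a: "\<And>i. i \<in> S \<Longrightarrow> a i \<in> G i" and b: "\<And>j. j \<in> T \<Longrightarrow> b j \<in> G j"
    and prod: "(\<Sum>i\<in>S. a i) * (\<Sum>j\<in>T. b j) \<in> G m"
    and ij: "i \<in> S" "j \<in> T" "i + j \<noteq> m"
    and isolated: "\<And>i' j'. i' \<in> S \<Longrightarrow> j' \<in> T \<Longrightarrow> i' + j' = i + j \<Longrightarrow> i' = i \<and> j' = j"
  shows "a i * b j = 0"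
proof -
  have "(\<lambda>(i, j). a i * b j) (i, j) = 0"
  proof (rule sum_homogeneous_isolated_degree[of "S \<times> T" _ "\<lambda>(i, j). i + j" _ m])
    show "(\<Sum>p\<in>S \<times> T. (\<lambda>(i, j). a i * b j) p) = (\<Sum>i\<in>S. a i) * (\<Sum>j\<in>T. b j)"
      by (simp add: sum_product sum.cartesian_product)
    show "(\<lambda>(i, j). a i * b j) p \<in> G ((\<lambda>(i, j). i + j) p)" if "p \<in> S \<times> T" for p
      using that a b homogeneous_mult by auto
    show "p = (i, j)" if "p \<in> S \<times> T" "(\<lambda>(i, j). i + j) p = (\<lambda>(i, j). i + j) (i, j)" for p
      using that isolated by auto
  qed (use fin prod ij in simp_all)
  then show ?thesis by simp
qed

lemma homogeneous_factor:
  assumes uv: "u * v \<in> G m" "u * v \<noteq> 0"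
  shows "\<exists>n. u \<in> G n"
proof -
  obtain a where "finite {i. a i \<noteq> 0}" and a: "\<And>i. a i \<in> G i" and u: "u = (\<Sum>i\<in>{i. a i \<noteq> 0}. a i)"
    using homogeneous_decomposition[of u] by blast
  obtain b where "finite {j. b j \<noteq> 0}" and b: "\<And>j. b j \<in> G j" and v: "v = (\<Sum>j\<in>{j. b j \<noteq> 0}. b j)"
    using homogeneous_decomposition[of v] by blast
  define S where "S = {i. a i \<noteq> 0}"
  define T where "T = {j. b j \<noteq> 0}"
  have fin: "finite S" "finite T"
    using \<open>finite {i. a i \<noteq> 0}\<close> \<open>finite {j. b j \<noteq> 0}\<close> by (simp_all add: S_def T_def)
  have "u \<noteq> 0" "v \<noteq> 0" using uv(2) by auto
  then have ne: "S \<noteq> {}" "T \<noteq> {}" unfolding S_def T_def using u v by (metis sum.empty)+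
  have prod: "(\<Sum>i\<in>S. a i) * (\<Sum>j\<in>T. b j) \<in> G m" using uv u v by (simp add: S_def T_def)
  have unique_sum: "i + j = m" if "i \<in> S" "j \<in> T"
    and "\<And>i' j'. i' \<in> S \<Longrightarrow> j' \<in> T \<Longrightarrow> i' + j' = i + j \<Longrightarrow> i' = i \<and> j' = j" for i j
  proof (rule ccontr)
    assume "i + j \<noteq> m"
    then have "a i * b j = 0" by (rule product_isolated_degree[OF fin a b prod that(1,2) _ that(3)])
    with that(1,2) show False by (simp add: S_def T_def)
  qed
  obtain M where "S = {M}" using singleton_if_unique_sums_eq[OF fin ne unique_sum] by blast
  then have "u = a M" using u by (simp add: S_def[symmetric])
  then show ?thesis using a by blast
qed

lemma unit_homogeneous:
  assumes "u * v = 1"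
  shows "\<exists>n. u \<in> G n"
proof -
  have "u * v \<in> G 0" "u * v \<noteq> 0" using assms one_homogeneous by simp_all
  then show ?thesis by (rule homogeneous_factor)
qed

lemma subfield_homogeneous_0:
  assumes k: "is_subfield k" and u: "u \<in> k"
  shows "u \<in> G 0"
proof -
  have homogeneous: "\<exists>n. w \<in> G n" if w: "w \<in> k" for w
  proof (cases "w = 0")
    case True
    then show ?thesis using homogeneous_0 by simp
  next
    case False
    then obtain v where "w * v = 1" using subfield_right_inverse[OF k w] by blast
    then show ?thesis by (rule unit_homogeneous)
  qed
  have "is_subring k" using k by (rule subfield_imp_subring)
  then have "1 + u \<in> k" using u by (intro subring_add subring_1)
  then obtain n' where n': "1 + u \<in> G n'" using homogeneous by blast
  obtain n where n: "u \<in> G n" using homogeneous[OF u] by blast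
  show ?thesis
  proof (cases "n = 0")
    case False
    text \<open>\<open>1 + u\<close> is homogeneous although \<open>1\<close> and \<open>u\<close> have different degrees.\<close>
    show ?thesis
    proof (cases "n' = n")
      case True
      then have "(1::'b) = 0"
        using homogeneous_add_isolated_degree[OF one_homogeneous n n'] False by simp
      then show ?thesis by simp
    next
      case n'_ne: False
      have "u + 1 \<in> G n'" using n' by (simp add: add.commute)
      then have "u = 0"
        using homogeneous_add_isolated_degree[OF n one_homogeneous] False n'_ne by simp
      then show ?thesis using homogeneous_0 by simp
    qed
  qed (use n in simp)
qed

section \<open>Homogeneous fractions\<close>

definition hom_frac :: "int \<Rightarrow> 'b fract set" where
  "hom_frac m = {to_fract p / to_fract q | p q i j. p \<in> G i \<and> q \<in> G j \<and> q \<noteq> 0 \<and> i - j = m}"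

lemma hom_fracI: "p \<in> G i \<Longrightarrow> q \<in> G j \<Longrightarrow> q \<noteq> 0 \<Longrightarrow> i - j = m \<Longrightarrow> to_fract p / to_fract q \<in> hom_frac m"
  unfolding hom_frac_def by blast

lemma hom_fracE:
  assumes "x \<in> hom_frac m"
  obtains p q i j where "p \<in> G i" "q \<in> G j" "q \<noteq> 0" "i - j = m" "x = to_fract p / to_fract q"
  using assms unfolding hom_frac_def by blast

lemma to_fract_in_hom_frac: "p \<in> G m \<Longrightarrow> to_fract p \<in> hom_frac m"
  using hom_fracI[OF _ one_homogeneous, of p m m] by (simp add: to_fract_1)

lemma hom_frac_zero: "0 \<in> hom_frac m"
  using to_fract_in_hom_frac[OF homogeneous_0] by (simp add: to_fract_0)

lemma hom_frac_mult:
  assumes "x \<in> hom_frac m" "y \<in> hom_frac n"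
  shows "x * y \<in> hom_frac (m + n)"
proof -
  obtain p q i j where x: "p \<in> G i" "q \<in> G j" "q \<noteq> 0" "i - j = m" "x = to_fract p / to_fract q"
    using assms(1) by (rule hom_fracE)
  obtain p' q' i' j' where y: "p' \<in> G i'" "q' \<in> G j'" "q' \<noteq> 0" "i' - j' = n" "y = to_fract p' / to_fract q'"
    using assms(2) by (rule hom_fracE)
  have "to_fract (p * p') / to_fract (q * q') \<in> hom_frac (m + n)"
    using x y by (intro hom_fracI[of _ "i + i'" _ "j + j'"] homogeneous_mult) auto
  then show ?thesis using x(5) y(5) by (simp add: to_fract_mult)
qed

lemma hom_frac_inverse:
  assumes "x \<in> hom_frac m"
  shows "inverse x \<in> hom_frac (- m)"
proof -
  obtain p q i j where x: "p \<in> G i" "q \<in> G j" "q \<noteq> 0" "i - j = m" "x = to_fract p / to_fract q"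
    using assms by (rule hom_fracE)
  show ?thesis
  proof (cases "p = 0")
    case True
    then show ?thesis using x(5) hom_frac_zero by (simp add: to_fract_0)
  next
    case False
    then have "to_fract q / to_fract p \<in> hom_frac (- m)" using x by (intro hom_fracI) auto
    then show ?thesis using x(5) by simp
  qed
qed

lemma hom_frac_divide: "x \<in> hom_frac m \<Longrightarrow> y \<in> hom_frac n \<Longrightarrow> x / y \<in> hom_frac (m - n)"
  using hom_frac_mult[OF _ hom_frac_inverse, of x m y n] by (simp add: divide_inverse)

lemma hom_frac_add:
  assumes "x \<in> hom_frac m" "y \<in> hom_frac m"
  shows "x + y \<in> hom_frac m"
proof -
  obtain p q i j where x: "p \<in> G i" "q \<in> G j" "q \<noteq> 0" "i - j = m" "x = to_fract p / to_fract q"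
    using assms(1) by (rule hom_fracE)
  obtain p' q' i' j' where y: "p' \<in> G i'" "q' \<in> G j'" "q' \<noteq> 0" "i' - j' = m" "y = to_fract p' / to_fract q'"
    using assms(2) by (rule hom_fracE)
  have "p' * q \<in> G (i' + j)" using x y homogeneous_mult by blast
  moreover have "i' + j = i + j'" using x(4) y(4) by simp
  ultimately have "p * q' + p' * q \<in> G (i + j')" using x y homogeneous_mult homogeneous_add by metis
  then have "to_fract (p * q' + p' * q) / to_fract (q * q') \<in> hom_frac m"
    using x y by (intro hom_fracI[of _ "i + j'" _ "j + j'"] homogeneous_mult) auto
  moreover have "x + y = to_fract (p * q' + p' * q) / to_fract (q * q')"
    using x y by (simp add: to_fract_add to_fract_mult to_fract_eq_0_iff field_simps)
  ultimately show ?thesis by simp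
qed

lemma hom_frac_uminus: "x \<in> hom_frac m \<Longrightarrow> - x \<in> hom_frac m"
  by (elim hom_fracE) (metis homogeneous_uminus to_fract_uminus hom_fracI minus_divide_left)

lemma hom_frac_diff: "x \<in> hom_frac m \<Longrightarrow> y \<in> hom_frac m \<Longrightarrow> x - y \<in> hom_frac m"
  using hom_frac_add[OF _ hom_frac_uminus, of x m y] by simp

lemma hom_frac_power: "x \<in> hom_frac m \<Longrightarrow> x ^ n \<in> hom_frac (int n * m)"
proof (induction n)
  case 0
  then show ?case using to_fract_in_hom_frac[OF one_homogeneous] by (simp add: to_fract_1)
next
  case (Suc n)
  then have "x * x ^ n \<in> hom_frac (m + int n * m)" using hom_frac_mult by blast
  then show ?case by (simp add: algebra_simps)
qed

lemma hom_frac_power_int: "x \<in> hom_frac m \<Longrightarrow> x powi n \<in> hom_frac (n * m)"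
  using hom_frac_power[of x m "nat n"] hom_frac_power[OF hom_frac_inverse, of x m "nat (- n)"]
  by (cases "n \<ge> 0") (simp_all add: power_int_def)

lemma is_subfield_hom_frac_0: "is_subfield (hom_frac 0)"
proof (rule subfieldI)
  show "is_subring (hom_frac 0)"
    unfolding is_subring_def
    using hom_frac_zero to_fract_in_hom_frac[OF one_homogeneous] hom_frac_add hom_frac_diff
      hom_frac_mult[of _ 0 _ 0]
    by (auto simp: to_fract_1)
qed (use hom_frac_inverse in fastforce)

text \<open>Clearing denominators turns a vanishing sum of homogeneous fractions into a vanishing sum
  of homogeneous elements.\<close>
lemma hom_frac_sum_eq_0:
  assumes fin: "finite J" and inj: "inj_on \<delta> J" and h: "\<And>j. j \<in> J \<Longrightarrow> h j \<in> hom_frac (\<delta> j)"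
    and sum: "(\<Sum>j\<in>J. h j) = 0" and j0: "j0 \<in> J"
  shows "h j0 = 0"
proof -
  have "\<forall>j\<in>J. \<exists>p q i k. p \<in> G i \<and> q \<in> G k \<and> q \<noteq> 0 \<and> i - k = \<delta> j \<and>
      h j = to_fract p / to_fract q"
    using h unfolding hom_frac_def by blast
  then obtain p q i k where pq: "\<And>j. j \<in> J \<Longrightarrow> p j \<in> G (i j) \<and> q j \<in> G (k j) \<and> q j \<noteq> 0 \<and>
      i j - k j = \<delta> j \<and> h j = to_fract (p j) / to_fract (q j)"
    by metis
  define c where "c j = p j * (\<Prod>l\<in>J - {j}. q l)" for j
  have to_fract_c: "to_fract (c j) = h j * to_fract (\<Prod>l\<in>J. q l)" if "j \<in> J" for j
  proof -
    have "(\<Prod>l\<in>J. q l) = q j * (\<Prod>l\<in>J - {j}. q l)" using fin that by (simp add: prod.remove)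
    then show ?thesis using pq[OF that] by (simp add: c_def to_fract_mult to_fract_eq_0_iff)
  qed
  have "to_fract (\<Sum>j\<in>J. c j) = (\<Sum>j\<in>J. h j) * to_fract (\<Prod>l\<in>J. q l)"
    by (simp add: to_fract_sum to_fract_c sum_distrib_right)
  then have c_sum: "(\<Sum>j\<in>J. c j) = 0" using sum by (simp add: to_fract_eq_0_iff)
  have c_hom: "c j \<in> G (\<delta> j + sum k J)" if "j \<in> J" for j
  proof -
    have "c j \<in> G (i j + sum k (J - {j}))"
      unfolding c_def using pq that fin by (intro homogeneous_mult homogeneous_prod) auto
    moreover have "i j + sum k (J - {j}) = \<delta> j + sum k J"
      using pq[OF that] fin that by (simp add: sum.remove)
    ultimately show ?thesis by simp
  qed
  text \<open>\<open>0\<close> is homogeneous of every degree, in particular of one different from all \<open>\<delta> j + sum k J\<close>.\<close>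
  have "c j0 = 0"
  proof (rule sum_homogeneous_isolated_degree[of J c "\<lambda>j. \<delta> j + sum k J" 0 "\<delta> j0 + sum k J + 1" j0])
    show "j = j0" if "j \<in> J" "\<delta> j + sum k J = \<delta> j0 + sum k J" for j
      using inj that j0 by (auto dest: inj_onD)
  qed (use fin c_hom homogeneous_0 c_sum j0 in simp_all)
  moreover have "(\<Prod>l\<in>J - {j0}. q l) \<noteq> 0" using pq fin by (simp add: prod_zero_iff)
  ultimately have "p j0 = 0" by (simp add: c_def)
  then show ?thesis using pq[OF j0] by (simp add: to_fract_0)
qed

lemma hloc0_subset_hom_frac_0:
  assumes "f \<in> G d" "f \<noteq> 0"
  shows "hloc0 G d f \<subseteq> hom_frac 0"
  unfolding hloc0_def
  using assms hom_fracI[OF _ homogeneous_power, of _ "int _ * d"]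
  by (auto simp: Fract_eq_to_fract_divide to_fract_power)

text \<open>For \<open>p, q\<close> of degree \<open>a\<close>, the multiplier \<open>w = q\<^bsup>|d|-1\<^esup> f\<^bsup>|a|\<^esup>\<close> brings both to degree
  \<open>a |d| + |a| d\<close>, a nonnegative multiple of \<open>d\<close>.\<close>
lemma hom_frac_0_quotient_hloc0:
  assumes f: "f \<in> G d" "f \<noteq> 0" "d \<noteq> 0" and pq: "p \<in> G a" "q \<in> G a" "q \<noteq> 0"
  shows "\<exists>x\<in>hloc0 G d f. \<exists>y\<in>hloc0 G d f. to_fract p / to_fract q = x / y"
proof -
  define w where "w = q ^ (nat \<bar>d\<bar> - 1) * f ^ nat \<bar>a\<bar>"
  define N where "N = nat (a * sgn d + \<bar>a\<bar>)"
  have deg: "a + (int (nat \<bar>d\<bar> - 1) * a + int (nat \<bar>a\<bar>) * d) = int N * d"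
  proof -
    have "int (nat \<bar>d\<bar> - 1) = \<bar>d\<bar> - 1" "int N = a * sgn d + \<bar>a\<bar>" "sgn d * d = \<bar>d\<bar>"
      using f(3) by (auto simp: N_def sgn_if)
    then show ?thesis by (simp add: algebra_simps)
  qed
  have "w \<in> G (int (nat \<bar>d\<bar> - 1) * a + int (nat \<bar>a\<bar>) * d)"
    unfolding w_def using pq(2) f(1) by (intro homogeneous_mult homogeneous_power)
  then have "p * w \<in> G (int N * d)" "q * w \<in> G (int N * d)"
    using homogeneous_mult[OF pq(1)] homogeneous_mult[OF pq(2)] unfolding deg[symmetric] by simp_all
  then have "Fract (p * w) (f ^ N) \<in> hloc0 G d f" "Fract (q * w) (f ^ N) \<in> hloc0 G d f"
    unfolding hloc0_def by blast+
  moreover have "to_fract p / to_fract q = Fract (p * w) (f ^ N) / Fract (q * w) (f ^ N)"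
    using pq f by (simp add: Fract_eq_to_fract_divide to_fract_mult to_fract_eq_0_iff w_def)
  ultimately show ?thesis by blast
qed

lemma hom_frac_0_subset_subfield:
  assumes f: "f \<in> G d" "f \<noteq> 0" "d \<noteq> 0" and L: "is_subfield L" "hloc0 G d f \<subseteq> L"
  shows "hom_frac 0 \<subseteq> L"
proof
  fix z assume "z \<in> hom_frac 0"
  then obtain p q a where pq: "p \<in> G a" "q \<in> G a" "q \<noteq> 0" "z = to_fract p / to_fract q"
    by (elim hom_fracE) simp
  then obtain x y where "x \<in> L" "y \<in> L" "z = x / y"
    using hom_frac_0_quotient_hloc0[OF f pq(1-3)] L(2) by blast
  then show "z \<in> L" using subfield_divide[OF L(1)] by simp
qed

lemma degree_generator:
  assumes f: "f \<in> G d" "f \<noteq> 0" "d \<noteq> 0"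
  obtains e y where "e \<noteq> 0" "y \<in> hom_frac e" "y \<noteq> 0" "\<And>m z. z \<in> hom_frac m \<Longrightarrow> z \<noteq> 0 \<Longrightarrow> e dvd m"
proof -
  define E where "E = {m. \<exists>z\<in>hom_frac m. z \<noteq> 0}"
  have diff_closed: "m - n \<in> E" if "m \<in> E" "n \<in> E" for m n
  proof -
    obtain z w where "z \<in> hom_frac m" "z \<noteq> 0" "w \<in> hom_frac n" "w \<noteq> 0"
      using \<open>m \<in> E\<close> \<open>n \<in> E\<close> unfolding E_def by blast
    then have "z / w \<in> hom_frac (m - n)" "z / w \<noteq> 0" using hom_frac_divide by simp_all
    then show ?thesis unfolding E_def by blast
  qed
  have "d \<in> E"
    using to_fract_in_hom_frac[OF f(1)] f(2) to_fract_eq_0_iff unfolding E_def by blast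
  then obtain e where "e > 0" "e \<in> E" "\<And>m. m \<in> E \<Longrightarrow> e dvd m"
    using int_set_diff_closed_generator[of E d] diff_closed f(3) by blast
  then show thesis using that[of e] unfolding E_def by blast
qed

lemma subfield_eq_UNIV_if_degree_generator:
  assumes L: "is_subfield L" "hom_frac 0 \<subseteq> L" and y: "y \<in> L" "y \<in> hom_frac e" "y \<noteq> 0"
    and gen: "\<And>m z. z \<in> hom_frac m \<Longrightarrow> z \<noteq> 0 \<Longrightarrow> e dvd m"
  shows "L = UNIV"
proof -
  have homogeneous_in_L: "to_fract b \<in> L" if b: "b \<in> G m" for b m
  proof (cases "b = 0")
    case True
    then show ?thesis using L(1) by (simp add: to_fract_0 subring_0 subfield_imp_subring)
  next
    case False
    then have "e dvd m" using gen[OF to_fract_in_hom_frac[OF b]] by (simp add: to_fract_eq_0_iff)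
    then obtain j where m: "m = j * e" by (metis dvd_def mult.commute)
    have "to_fract b / y powi j \<in> hom_frac 0"
      using hom_frac_divide[OF to_fract_in_hom_frac[OF b] hom_frac_power_int[OF y(2), of j]] m by simp
    then have "to_fract b / y powi j * y powi j \<in> L"
      using L subfield_power_int[OF L(1) y(1)] subring_mult[OF subfield_imp_subring[OF L(1)]] by blast
    then show ?thesis using y(3) by simp
  qed
  have "to_fract b \<in> L" for b
  proof -
    obtain c where c: "\<forall>m. c m \<in> G m" "b = (\<Sum>m\<in>{m. c m \<noteq> 0}. c m)"
      using homogeneous_decomposition[of b] by blast
    have "(\<Sum>m\<in>{m. c m \<noteq> 0}. to_fract (c m)) \<in> L"
      using c(1) by (intro subring_sum[OF subfield_imp_subring[OF L(1)]] homogeneous_in_L) blast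
    then show ?thesis using c(2) by (simp add: to_fract_sum)
  qed
  then have "Fract a b \<in> L" for a b
    using subfield_divide[OF L(1)] by (simp add: Fract_eq_to_fract_divide)
  then show ?thesis by (metis UNIV_eq_I Fract_cases)
qed

text \<open>A polynomial relation \<open>\<Sum>\<^sub>j P\<^sub>j(t) y\<^sup>j = 0\<close> splits into homogeneous components of the
  distinct degrees \<open>j e\<close>, so each \<open>P\<^sub>j(t)\<close> vanishes.\<close>
lemma alg_indep2_degree_0_and_homogeneous:
  assumes K: "is_subfield K" "K \<subseteq> hom_frac 0" and t: "t \<in> hom_frac 0" "transcendental_over K t"
    and y: "y \<in> hom_frac e" "y \<noteq> 0" "e \<noteq> 0"
  shows "alg_indep2 K t y"
  unfolding alg_indep2_def
proof (intro allI impI)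
  fix P :: "'b fract poly poly"
  assume P: "(\<forall>q\<in>set (coeffs P). set (coeffs q) \<subseteq> K) \<and> poly (map_poly (\<lambda>q. poly q t) P) y = 0"
  have K0: "0 \<in> K" using K(1) by (simp add: subring_0 subfield_imp_subring)
  have coeff_K: "coeff (coeff P j) n \<in> K" for j n
    using P forall_coeffs_conv[of "\<lambda>q. \<forall>n. coeff q n \<in> K" P] set_coeffs_subset_iff[OF K0] K0 by auto
  have "poly (map_poly (\<lambda>q. poly q t) P) y = (\<Sum>j\<le>degree P. poly (coeff P j) t * y ^ j)"
  proof -
    have "poly (map_poly (\<lambda>q. poly q t) P) y
        = (\<Sum>j\<le>degree P. coeff (map_poly (\<lambda>q. poly q t) P) j * y ^ j)"
      unfolding poly_altdef by (rule sum.mono_neutral_left) (auto simp: map_poly_degree_leq coeff_eq_0)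
    then show ?thesis by (simp add: coeff_map_poly)
  qed
  then have sum: "(\<Sum>j\<le>degree P. poly (coeff P j) t * y ^ j) = 0" using P by simp
  have "poly (coeff P j) t \<in> hom_frac 0" for j
    using subring_poly[OF subfield_imp_subring[OF is_subfield_hom_frac_0] _ t(1)] coeff_K K(2) by blast
  then have hom: "poly (coeff P j) t * y ^ j \<in> hom_frac (int j * e)" for j
    using hom_frac_mult[OF _ hom_frac_power[OF y(1)]] by fastforce
  have "inj_on (\<lambda>j. int j * e) {..degree P}" using y(3) by (auto simp: inj_on_def)
  then have "poly (coeff P j) t * y ^ j = 0" if "j \<le> degree P" for j
    using hom_frac_sum_eq_0[OF finite_atMost _ hom sum] that by simp
  then have "poly (coeff P j) t = 0" if "j \<le> degree P" for j
    using that y(2) by simp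
  then have "coeff P j = 0" for j
    using transcendental_overD[OF t(2) K0 coeff_K] coeff_eq_0[of P j] by (cases "j \<le> degree P") auto
  then show "P = 0" by (simp add: poly_eqI)
qed

text \<open>Elements of a subfield \<open>k \<subseteq> B\<close> are units of degree \<open>0\<close>, hence units of \<open>B\<^sub>(\<^sub>f\<^sub>) = A[t]\<close>.\<close>
lemma subfield_to_fract_subset:
  assumes k: "is_subfield k" and f: "f \<in> G d" and A: "is_subring A" "transcendental_over A t"
    and C: "hloc0 G d f = {poly p t | p. set (coeffs p) \<subseteq> A}"
  shows "to_fract ` k \<subseteq> A"
proof
  fix x assume "x \<in> to_fract ` k"
  then obtain u where u: "u \<in> k" "x = to_fract u" by blast
  have poly: "\<exists>p. (\<forall>n. coeff p n \<in> A) \<and> to_fract w = poly p t" if "w \<in> k" for w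
  proof -
    have "w \<in> G (int 0 * d)" using subfield_homogeneous_0[OF k that] by simp
    then have "Fract w (f ^ 0) \<in> hloc0 G d f" unfolding hloc0_def by blast
    then show ?thesis using C set_coeffs_subset_iff[OF subring_0[OF A(1)]] by (auto simp: to_fract_def)
  qed
  show "x \<in> A"
  proof (cases "u = 0")
    case True
    then show ?thesis using u(2) A(1) by (simp add: to_fract_0 subring_0)
  next
    case False
    then obtain v where v: "v \<in> k" "u * v = 1" using subfield_right_inverse[OF k u(1)] by blast
    obtain p q where "\<forall>n. coeff p n \<in> A" "to_fract u = poly p t"
      and "\<forall>n. coeff q n \<in> A" "to_fract v = poly q t"
      using poly[OF u(1)] poly[OF v(1)] by blast
    moreover have "to_fract u * to_fract v = 1" using v(2) by (metis to_fract_1 to_fract_mult)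
    ultimately show ?thesis using poly_unit_in_subring[OF A] u(2) by auto
  qed
qed

lemma field_gen_frac_field_eq_UNIV:
  assumes f: "f \<in> G d" "f \<noteq> 0" "d \<noteq> 0"
    and A: "is_subring A" and C: "hloc0 G d f = {poly p t | p. set (coeffs p) \<subseteq> A}"
    and y: "y \<in> hom_frac e" "y \<noteq> 0" "\<And>m z. z \<in> hom_frac m \<Longrightarrow> z \<noteq> 0 \<Longrightarrow> e dvd m"
  shows "field_gen (frac_field A \<union> {t, y}) = UNIV"
proof -
  define L where "L = field_gen (frac_field A \<union> {t, y})"
  have "frac_field A \<union> {t, y} \<subseteq> L" unfolding L_def by (rule field_gen_superset)
  then have L: "is_subfield L" "A \<subseteq> L" "t \<in> L" "y \<in> L"
    using subset_frac_field[OF A] by (auto simp: L_def is_subfield_field_gen)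
  have "hloc0 G d f \<subseteq> L"
    unfolding C by (rule subring_poly_image_subset[OF subfield_imp_subring[OF L(1)] L(2,3)])
  then have "hom_frac 0 \<subseteq> L" by (rule hom_frac_0_subset_subfield[OF f L(1)])
  then show ?thesis unfolding L_def[symmetric]
    by (rule subfield_eq_UNIV_if_degree_generator[OF L(1) _ L(4) y])
qed

end

theorem proposition1p3:
  fixes G :: "int \<Rightarrow> 'b::idom set" and k :: "'b set"
  assumes "Z_grading G"
    and "is_subfield k"
    and "\<exists>f. cylindrical G f"
  shows "\<exists>(K :: 'b fract set) x y. is_subfield K \<and> (\<lambda>a. Fract a 1) ` k \<subseteq> K \<and>
           alg_indep2 K x y \<and> field_gen (K \<union> {x, y}) = UNIV"
proof -
  interpret Z_graded_domain G using assms(1) by (rule Z_graded_domain.intro)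
  obtain f d where f: "f \<in> G d" "f \<noteq> 0" "d \<noteq> 0" and "poly_ring1 (hloc0 G d f)"
    using assms(3) unfolding cylindrical_def by blast
  then obtain A t where A: "is_subring A" "A \<subseteq> hloc0 G d f" "transcendental_over A t"
    and t: "t \<in> hloc0 G d f" and C: "hloc0 G d f = {poly p t | p. set (coeffs p) \<subseteq> A}"
    unfolding poly_ring1_def transcendental_over_def by blast
  obtain e y where y: "e \<noteq> 0" "y \<in> hom_frac e" "y \<noteq> 0"
    and gen: "\<And>m z. z \<in> hom_frac m \<Longrightarrow> z \<noteq> 0 \<Longrightarrow> e dvd m"
    using degree_generator[OF f] by blast
  define K where "K = frac_field A"
  have K: "is_subfield K" "transcendental_over K t" "A \<subseteq> K"
    unfolding K_def using A by (simp_all add: is_subfield_frac_field transcendental_over_frac_field subset_frac_field)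
  have B0: "hloc0 G d f \<subseteq> hom_frac 0" by (rule hloc0_subset_hom_frac_0[OF f(1,2)])
  then have "K \<subseteq> hom_frac 0"
    unfolding K_def using A(2) by (intro frac_field_subset is_subfield_hom_frac_0) blast
  moreover have "t \<in> hom_frac 0" using t B0 by blast
  ultimately have "alg_indep2 K t y"
    using K(2) y(2,3,1) by (rule alg_indep2_degree_0_and_homogeneous[OF K(1)])
  moreover have "(\<lambda>a. Fract a 1) ` k \<subseteq> K"
    using subfield_to_fract_subset[OF assms(2) f(1) A(1,3) C] K(3) unfolding to_fract_def by blast
  moreover have "field_gen (K \<union> {t, y}) = UNIV"
    unfolding K_def using field_gen_frac_field_eq_UNIV[OF f A(1) C y(2,3) gen] .
  ultimately show ?thesis using K(1) by (intro exI conjI)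
qed

end
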